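(* Let $V$ be a real vector space of odd finite dimension, $G\le\mathrm{GL}(V)$ a finite group such that $V$ is a non-trivial irreducible $\mathbb{R}G$-module and $-\mathrm{id}_V\notin G$, and let $n\in N_{\mathrm{GL}(V)}(G)$ have finite order, with $\nu=\mathrm{ad}_n$. Suppose there is $g\in G$ such that $\alpha:=\mathrm{ad}_g\circ\nu\in\mathrm{Aut}(G)$ has even order and $$\dim(V)>(|\alpha|-1)\,|C_G(\alpha')|^{1/2}$$ for every $\alpha'\in\langle\alpha\rangle$ of prime order. Then the triple $(G,V,n)$ has the $E1$-property, i.e. there is $h\in G$ such that $hn$ has eigenvalue $1$.
   Context: For $x\in N_{\mathrm{GL}(V)}(G)$, $\mathrm{ad}_x\in\mathrm{Aut}(G)$ denotes conjugation $y\mapsto xyx^{-1}$. For $\beta\in\mathrm{Aut}(G)$, $C_G(\beta)=\{y\in G\mid\beta(y)=y\}$, and $|\alpha|$ denotes the order of $\alpha$. *)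

theory Defs
  imports "HOL-Analysis.Analysis"
begin

text \<open>V = real^'n, GL(V) = invertible matrices real^'n^'n acting by *v.\<close>

primrec mpow :: "real^'n^'n \<Rightarrow> nat \<Rightarrow> real^'n^'n" where
  "mpow A 0 = mat 1"
| "mpow A (Suc k) = A ** mpow A k"

definition finite_matrix_group :: "(real^'n^'n) set \<Rightarrow> bool" where
  "finite_matrix_group G \<longleftrightarrow> finite G \<and> mat 1 \<in> G \<and>
     (\<forall>x\<in>G. \<forall>y\<in>G. x ** y \<in> G) \<and>
     (\<forall>x\<in>G. invertible x \<and> matrix_inv x \<in> G)"

definition irreducible_module :: "(real^'n^'n) set \<Rightarrow> bool" where
  "irreducible_module G \<longleftrightarrow>
     (\<forall>W :: (real^'n) set. subspace W \<and> (\<forall>h\<in>G. \<forall>w\<in>W. h *v w \<in> W)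
        \<longrightarrow> W = {0} \<or> W = UNIV)"

definition nontrivial_module :: "(real^'n^'n) set \<Rightarrow> bool" where
  "nontrivial_module G \<longleftrightarrow> (\<exists>h\<in>G. \<exists>v. h *v v \<noteq> v)"

definition ad :: "real^'n^'n \<Rightarrow> real^'n^'n \<Rightarrow> real^'n^'n" where
  "ad x y = x ** y ** matrix_inv x"

definition in_normalizer :: "real^'n^'n \<Rightarrow> (real^'n^'n) set \<Rightarrow> bool" where
  "in_normalizer x G \<longleftrightarrow> invertible x \<and> ad x ` G = G"

definition aut_order :: "(real^'n^'n) set \<Rightarrow> (real^'n^'n \<Rightarrow> real^'n^'n) \<Rightarrow> nat" where
  "aut_order G f = (LEAST k. k > 0 \<and> (\<forall>y\<in>G. (f ^^ k) y = y))"

definition centralizer_aut :: "(real^'n^'n) set \<Rightarrow> (real^'n^'n \<Rightarrow> real^'n^'n) \<Rightarrow> (real^'n^'n) set" where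
  "centralizer_aut G f = {y\<in>G. f y = y}"

definition E1_property :: "(real^'n^'n) set \<Rightarrow> real^'n^'n \<Rightarrow> bool" where
  "E1_property G n \<longleftrightarrow> (\<exists>h\<in>G. \<exists>v. v \<noteq> 0 \<and> (h ** n) *v v = v)"

end

theory Submission
  imports Defs
begin

text \<open>
  Put \<open>x = g n\<close>, so that \<open>\<alpha> = ad x\<close>, and let \<open>m = |\<alpha>|\<close>. The matrix \<open>x\<^sup>m\<close> centralizes
  the irreducible group \<open>G\<close>; in odd dimension Schur's lemma makes it a scalar, which is \<open>1\<close> because
  \<open>x\<close> has finite order and \<open>det (x\<^sup>m) \<ge> 0\<close> for even \<open>m\<close>. For \<open>0 < i < m\<close> put \<open>y = x\<^sup>i\<close>.
  The orthogonality relation \<open>\<Sum>\<^sub>h\<^sub>\<in>\<^sub>G tr (h y) tr ((h y)\<^sup>-\<^sup>1) = |G|\<close>, together with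
  \<open>tr (z\<^sup>-\<^sup>1) = tr z\<close> for \<open>z\<close> of finite order, gives \<open>tr (y)\<^sup>2 \<le> |C\<^sub>G(ad y)|\<close>, since
  \<open>tr (t y) = tr y\<close> for the \<open>|G| / |C\<^sub>G(ad y)|\<close> elements \<open>t = k y k\<^sup>-\<^sup>1 y\<^sup>-\<^sup>1\<close> of \<open>G\<close>.
  Some power of \<open>ad y\<close> has prime order and a larger centralizer, so the hypothesis yields
  \<open>|tr x\<^sup>i| < dim V / (m - 1)\<close>. Hence \<open>P = \<Sum>\<^sub>i\<^sub><\<^sub>m x\<^sup>i\<close> has positive trace, and every
  nonzero vector in the image of \<open>P\<close> is fixed by \<open>x\<close>.
\<close>

lemma matrix_inv_cancel:
  fixes A :: "'a::semiring_1^'n^'n"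
  assumes "invertible A"
  shows "A ** matrix_inv A = mat 1" "matrix_inv A ** A = mat 1"
  using someI_ex[of "\<lambda>A'. A ** A' = mat 1 \<and> A' ** A = mat 1"] assms
  unfolding invertible_def matrix_inv_def by auto

lemma matrix_inv_cancel_assoc:
  fixes A X :: "'a::comm_semiring_1^'n^'n"
  assumes "invertible A"
  shows "X ** A ** matrix_inv A = X" "X ** matrix_inv A ** A = X"
  using matrix_inv_cancel[OF assms] by (simp_all flip: matrix_mul_assoc)

lemma matrix_inv_unique:
  fixes A B :: "'a::field^'n^'n"
  assumes "A ** B = mat 1"
  shows "matrix_inv A = B"
proof -
  have "invertible A" using assms invertible_right_inverse by blast
  have "matrix_inv A = matrix_inv A ** (A ** B)" by (simp add: assms)
  also have "\<dots> = B" by (simp add: matrix_mul_assoc matrix_inv_cancel \<open>invertible A\<close>)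
  finally show ?thesis .
qed

lemma invertible_mat_1: "invertible (mat 1 :: 'a::semiring_1^'n^'n)"
  unfolding invertible_def by (intro exI[of _ "mat 1"]) simp

lemma invertible_matrix_inv:
  fixes A :: "'a::semiring_1^'n^'n"
  shows "invertible A \<Longrightarrow> invertible (matrix_inv A)"
  using matrix_inv_cancel unfolding invertible_def by blast

lemma matrix_inv_mat_1: "matrix_inv (mat 1 :: 'a::field^'n^'n) = mat 1"
  by (rule matrix_inv_unique) simp

lemma matrix_inv_mult:
  fixes A B :: "'a::field^'n^'n"
  assumes "invertible A" "invertible B"
  shows "matrix_inv (A ** B) = matrix_inv B ** matrix_inv A"
  by (rule matrix_inv_unique) (simp add: matrix_mul_assoc matrix_inv_cancel_assoc matrix_inv_cancel assms)

lemma matrix_mul_right_cancel: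
  fixes A X Y :: "'a::comm_semiring_1^'n^'n"
  assumes "invertible A" "X ** A = Y ** A"
  shows "X = Y"
  by (metis assms matrix_inv_cancel_assoc(1))

lemma matrix_sum_mult:
  fixes B :: "'a::comm_semiring_1^'n^'n"
  shows "(\<Sum>i\<in>S. f i) ** B = (\<Sum>i\<in>S. f i ** B)"
  by (simp add: vec_eq_iff matrix_matrix_mult_def sum_distrib_right sum.swap[of _ UNIV])

lemma matrix_mult_sum:
  fixes B :: "'a::comm_semiring_1^'n^'n"
  shows "B ** (\<Sum>i\<in>S. f i) = (\<Sum>i\<in>S. B ** f i)"
  by (simp add: vec_eq_iff matrix_matrix_mult_def sum_distrib_left sum.swap[of _ UNIV])

lemma matrix_sum_vector_mult:
  fixes f :: "_ \<Rightarrow> 'a::comm_semiring_1^'n^'m"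
  shows "(\<Sum>i\<in>S. f i) *v v = (\<Sum>i\<in>S. f i *v v)"
  by (induction S rule: infinite_finite_induct) (simp_all add: matrix_vector_mult_add_rdistrib)

lemma trace_sum: "trace (\<Sum>i\<in>S. f i :: 'a::comm_semiring_1^'n^'n) = (\<Sum>i\<in>S. trace (f i))"
  unfolding trace_def by (simp add: sum.swap[of _ UNIV])

lemma trace_transpose: "trace (transpose A) = trace (A :: 'a::comm_semiring_1^'n^'n)"
  by (simp add: trace_def transpose_def)

lemma det_scaleR_mat_1: "det (c *\<^sub>R mat 1 :: real^'n^'n) = c ^ CARD('n)"
  by (simp add: det_diagonal mat_def)

lemma scaleR_mat_1_mult: "(c *\<^sub>R mat 1) ** (X::real^'n^'n) = c *\<^sub>R X"
  by (metis scalar_matrix_assoc matrix_mul_lid)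

lemma mpow_add: "mpow A (a + b) = mpow A a ** mpow A b"
  by (induction a) (simp_all add: matrix_mul_assoc)

lemma mpow_Suc_right: "mpow A (Suc k) = mpow A k ** A"
  by (induction k) (simp_all add: matrix_mul_assoc)

lemma mpow_mult: "mpow A (a * b) = mpow (mpow A a) b"
  by (induction b) (simp_all add: mpow_add mult.commute[of a] mpow_Suc_right flip: mult_Suc_right)

lemma mpow_mat_1: "mpow (mat 1 :: real^'n^'n) k = mat 1"
  by (induction k) simp_all

lemma mpow_scaleR_mat_1: "mpow (c *\<^sub>R mat 1 :: real^'n^'n) k = (c ^ k) *\<^sub>R mat 1"
  by (induction k) (simp_all add: scaleR_mat_1_mult)

lemma mpow_mod:
  assumes "mpow A N = mat 1"
  shows "mpow A k = mpow A (k mod N)"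
  by (metis assms div_mult_mod_eq mpow_add mpow_mat_1 mpow_mult matrix_mul_lid mult.commute)

lemma invertible_mpow: "invertible A \<Longrightarrow> invertible (mpow A k)"
  by (induction k) (simp_all add: invertible_mat_1 invertible_mult)

lemma invertible_if_mpow_eq_mat_1:
  assumes "N > 0" "mpow A N = mat 1"
  shows "invertible A"
  by (metis assms gr0_conv_Suc invertible_right_inverse mpow.simps(2))

lemma det_mpow: "det (mpow A k) = det A ^ k"
  by (induction k) (simp_all add: det_mul)

lemma ad_mult:
  assumes "invertible A" "invertible B"
  shows "ad (A ** B) = ad A \<circ> ad B"
  by (rule ext) (simp add: ad_def matrix_inv_mult assms matrix_mul_assoc)

lemma ad_mat_1: "ad (mat 1 :: real^'n^'n) = id"
  by (rule ext) (simp add: ad_def matrix_inv_mat_1)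

lemma funpow_ad: "invertible A \<Longrightarrow> ad A ^^ k = ad (mpow A k)"
  by (induction k) (simp_all add: ad_mat_1 ad_mult invertible_mpow)

lemma trace_ad: "invertible A \<Longrightarrow> trace (ad A B) = trace B"
  unfolding ad_def by (metis trace_mul_sym matrix_mul_assoc matrix_inv_cancel(2) matrix_mul_lid)

lemma ad_eq_iff_commute:
  assumes "invertible A"
  shows "ad A B = B \<longleftrightarrow> A ** B = B ** A"
  by (metis ad_def assms matrix_inv_cancel_assoc)

section \<open>Real eigenvalues in odd dimension\<close>

lemma isCont_det_affine:
  fixes A B :: "real^'n^'n"
  shows "isCont (\<lambda>t. det (A + t *\<^sub>R B)) t0"
  unfolding det_def by (auto intro!: continuous_intros)

lemma odd_dim_real_eigenvalue:
  fixes M :: "real^'n^'n"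
  assumes odd: "odd CARD('n)"
  shows "\<exists>c. det (M - c *\<^sub>R mat 1) = 0"
proof -
  define h where "h s = det (- mat 1 + s *\<^sub>R M)" for s
  have "h 0 = -1"
    using det_scaleR_mat_1[of "-1", where 'n='n] odd by (simp add: h_def)
  moreover have "isCont h 0" unfolding h_def by (rule isCont_det_affine)
  ultimately have "eventually (\<lambda>s. h s < 0) (at 0)"
    using order_tendstoD(2)[of h "h 0" "at 0" 0] by (simp add: isCont_def)
  then obtain d where d: "d > 0" "\<And>s. s \<noteq> 0 \<Longrightarrow> \<bar>s\<bar> < d \<Longrightarrow> h s < 0"
    unfolding eventually_at dist_real_def by auto
  define T where "T = 2 / d"
  have T: "T > 0" "h (1 / T) < 0" "h (- 1 / T) < 0"
    using d by (auto simp: T_def intro!: d(2))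
  \<comment> \<open>\<open>det (M - t I)\<close> has the sign of \<open>t\<^sup>n h (1 / t)\<close>, hence opposite signs at \<open>\<plusminus>T\<close>.\<close>
  have det_factor: "det (M - t *\<^sub>R mat 1) = t ^ CARD('n) * h (1 / t)" if "t \<noteq> 0" for t
  proof -
    have "M - t *\<^sub>R mat 1 = (t *\<^sub>R mat 1) ** (- mat 1 + (1 / t) *\<^sub>R M)"
      using that by (simp add: scaleR_mat_1_mult algebra_simps)
    then show ?thesis unfolding h_def by (simp only: det_mul det_scaleR_mat_1)
  qed
  have "det (M - T *\<^sub>R mat 1) < 0"
    using T by (simp add: det_factor mult_pos_neg)
  moreover have "det (M - (- T) *\<^sub>R mat 1) > 0"
    using det_factor[of "- T"] T odd by (simp add: power_minus_odd mult_pos_neg)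
  moreover have "isCont (\<lambda>t. det (M - t *\<^sub>R mat 1)) t" for t
    using isCont_det_affine[where A=M and B="- mat 1"] by (simp add: algebra_simps)
  ultimately show ?thesis
    using IVT2[of "\<lambda>t. det (M - t *\<^sub>R mat 1)" T 0 "- T"] T(1) by force
qed

section \<open>Traces of matrices of finite order\<close>

lemma finite_order_invariant_form:
  fixes z :: "real^'n^'n"
  assumes "N > 0" "mpow z N = mat 1"
  obtains S where "invertible S" "transpose z ** S ** z = S"
proof
  define F where "F k = transpose (mpow z k) ** mpow z k" for k
  define S where "S = (\<Sum>k<N. F k)"
  have "transpose z ** F k ** z = F (Suc k)" for k
    unfolding F_def mpow_Suc_right matrix_transpose_mul by (simp add: matrix_mul_assoc)
  then have "transpose z ** S ** z = (\<Sum>k<N. F (Suc k))"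
    by (simp add: S_def matrix_sum_mult matrix_mult_sum matrix_mul_assoc)
  also have "\<dots> = S"
    using assms sum.lessThan_Suc_shift[of F] sum.lessThan_Suc[of "\<lambda>k. F (Suc k)"]
    by (cases N) (simp_all add: S_def F_def add.commute)
  finally show "transpose z ** S ** z = S" .
  have "v = 0" if "S *v v = 0" for v
  proof -
    have "inner v (F k *v v) = inner (mpow z k *v v) (mpow z k *v v)" for k
      by (simp add: F_def inner_commute flip: matrix_vector_mul_assoc dot_lmul_matrix)
    then have "inner v (S *v v) = (\<Sum>k<N. inner (mpow z k *v v) (mpow z k *v v))"
      by (simp add: S_def matrix_sum_vector_mult inner_sum_right)
    also have "\<dots> \<ge> inner (mpow z 0 *v v) (mpow z 0 *v v)"
      by (rule member_le_sum) (use assms in auto)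
    finally show ?thesis using that by (simp add: not_less[symmetric])
  qed
  then show "invertible S"
    unfolding invertible_left_inverse matrix_left_invertible_ker by blast
qed

text \<open>A matrix of finite order preserves a positive definite form, so its inverse is similar
  to its transpose.\<close>
lemma trace_matrix_inv_finite_order:
  fixes z :: "real^'n^'n"
  assumes "N > 0" "mpow z N = mat 1"
  shows "trace (matrix_inv z) = trace z"
proof -
  obtain S where S: "invertible S" "transpose z ** S ** z = S"
    using finite_order_invariant_form[OF assms] by blast
  have z: "invertible z" using invertible_if_mpow_eq_mat_1[OF assms] .
  have "transpose z ** S = S ** matrix_inv z"
    using arg_cong[OF S(2), of "\<lambda>X. X ** matrix_inv z"] by (simp add: matrix_inv_cancel_assoc z)
  then have "matrix_inv z = matrix_inv S ** transpose z ** S"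
    by (simp add: matrix_mul_assoc matrix_inv_cancel S(1) flip: matrix_mul_assoc[of "matrix_inv S"])
  also have "trace \<dots> = trace (S ** matrix_inv S ** transpose z)"
    by (simp add: trace_mul_sym[of "matrix_inv S ** transpose z"] matrix_mul_assoc)
  finally show ?thesis by (simp add: matrix_inv_cancel S(1) trace_transpose)
qed

section \<open>Schur's lemma and the orthogonality relation\<close>

definition elementary_matrix :: "'n::finite \<Rightarrow> 'n \<Rightarrow> real^'n^'n" where
  "elementary_matrix a b = (\<chi> i j. if i = a \<and> j = b then 1 else 0)"

lemma trace_elementary_matrix: "trace (elementary_matrix a b) = (if a = b then 1 else 0)"
proof (cases "a = b")
  case False
  then have "\<And>i. (if i = a \<and> i = b then 1 else (0::real)) = 0" by auto
  then show ?thesis using False by (simp add: elementary_matrix_def trace_def)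
qed (simp add: elementary_matrix_def trace_def)

lemma elementary_matrix_sandwich_entry:
  "(A ** elementary_matrix a b ** B) $ a $ b = A $ a $ a * B $ b $ b"
proof -
  have column: "(A ** elementary_matrix a b) $ i $ j = (if j = b then A $ i $ a else 0)" for i j
    by (cases "j = b") (simp_all add: elementary_matrix_def matrix_matrix_mult_def
        if_distrib if_distribR cong: if_cong)
  show ?thesis
    by (simp add: matrix_matrix_mult_def[of "A ** elementary_matrix a b"] column if_distrib if_distribR
        cong: if_cong)
qed

lemma trace_mult_trace:
  "trace A * trace B = (\<Sum>a\<in>UNIV. \<Sum>b\<in>UNIV. (A ** elementary_matrix a b ** B) $ a $ b)"
  by (simp add: elementary_matrix_sandwich_entry trace_def sum_product)

lemma card_le_card_image_mult_card:
  assumes "finite A" "finite C" and fibre: "\<And>a. a \<in> A \<Longrightarrow> {a' \<in> A. f a' = f a} \<subseteq> h a ` C"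
  shows "card A \<le> card (f ` A) * card C"
proof -
  have "card A = card (\<Union>z\<in>f ` A. {a \<in> A. f a = z})"
    by (rule arg_cong[of _ _ card]) blast
  also have "\<dots> \<le> (\<Sum>z\<in>f ` A. card {a \<in> A. f a = z})"
    by (rule card_UN_le) (simp add: assms(1))
  also have "\<dots> \<le> (\<Sum>z\<in>f ` A. card C)"
  proof (rule sum_mono)
    fix z assume "z \<in> f ` A"
    then obtain a where "a \<in> A" "z = f a" by blast
    then have "card {a' \<in> A. f a' = z} \<le> card (h a ` C)"
      using fibre by (simp add: card_mono assms(2))
    also have "\<dots> \<le> card C" by (rule card_image_le) (rule assms(2))
    finally show "card {a' \<in> A. f a' = z} \<le> card C" .
  qed
  finally show ?thesis by simp
qed

locale matrix_group =
  fixes G :: "(real^'d^'d) set"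
  assumes group: "finite_matrix_group G"
begin

lemma finite_carrier: "finite G"
  and mat_1_mem: "mat 1 \<in> G"
  and mult_mem: "x \<in> G \<Longrightarrow> y \<in> G \<Longrightarrow> x ** y \<in> G"
  and invertible_mem: "x \<in> G \<Longrightarrow> invertible x"
  and matrix_inv_mem: "x \<in> G \<Longrightarrow> matrix_inv x \<in> G"
  using group unfolding finite_matrix_group_def by auto

lemma finite_centralizer: "finite (centralizer_aut G f)"
  using finite_carrier unfolding centralizer_aut_def by simp

lemma ad_mem: "x \<in> G \<Longrightarrow> y \<in> G \<Longrightarrow> ad x y \<in> G"
  by (simp add: ad_def mult_mem matrix_inv_mem)

lemma card_le_card_conjugates_mult_card_centralizer:
  assumes y: "invertible y"
  shows "card G \<le> card ((\<lambda>k. ad k y ** matrix_inv y) ` G) * card (centralizer_aut G (ad y))"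
proof (rule card_le_card_image_mult_card[OF finite_carrier finite_centralizer])
  fix k assume k: "k \<in> G"
  show "{k' \<in> G. ad k' y ** matrix_inv y = ad k y ** matrix_inv y} \<subseteq> (**) k ` centralizer_aut G (ad y)"
  proof clarify
    fix k' assume k': "k' \<in> G" "ad k' y ** matrix_inv y = ad k y ** matrix_inv y"
    define c where "c = matrix_inv k ** k'"
    have "ad k' y = ad k y"
      using matrix_mul_right_cancel[OF invertible_matrix_inv[OF y] k'(2)] .
    then have "matrix_inv k ** ad k' y ** k' = matrix_inv k ** ad k y ** k'" by simp
    then have "y ** c = c ** y"
      using k k'(1) by (simp add: ad_def c_def matrix_mul_assoc matrix_inv_cancel
          matrix_inv_cancel_assoc invertible_mem)
    then have "c \<in> centralizer_aut G (ad y)"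
      using k k' y by (simp add: c_def centralizer_aut_def ad_eq_iff_commute mult_mem matrix_inv_mem)
    moreover have "k' = k ** c"
      using k by (simp add: c_def matrix_mul_assoc matrix_inv_cancel invertible_mem)
    ultimately show "k' \<in> (**) k ` centralizer_aut G (ad y)" by blast
  qed
qed

end

locale odd_irreducible_group = matrix_group G for G :: "(real^'d^'d) set" +
  assumes odd_dim: "odd CARD('d)"
    and irreducible: "irreducible_module G"
begin

text \<open>Schur's lemma: a real endomorphism of odd dimension has an eigenvalue, and its eigenspace
  is \<open>G\<close>-invariant.\<close>
lemma commuting_matrix_eq_scalar:
  assumes comm: "\<And>h. h \<in> G \<Longrightarrow> h ** M = M ** h"
  shows "M = (trace M / real CARD('d)) *\<^sub>R mat 1"
proof -
  obtain c where "det (M - c *\<^sub>R mat 1) = 0" using odd_dim_real_eigenvalue[OF odd_dim] by blast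
  then have "\<not> invertible (M - c *\<^sub>R mat 1)" by (simp add: invertible_det_nz)
  then obtain v where v: "v \<noteq> 0" "(M - c *\<^sub>R mat 1) *v v = 0"
    unfolding invertible_left_inverse matrix_left_invertible_ker by blast
  define W where "W = {w. M *v w = c *\<^sub>R w}"
  have "subspace W" unfolding W_def subspace_def by (auto simp: algebra_simps)
  moreover have "\<forall>h\<in>G. \<forall>w\<in>W. h *v w \<in> W"
    unfolding W_def using comm
    by (auto simp: matrix_vector_mul_assoc algebra_simps) (metis matrix_vector_mul_assoc matrix_vector_mult_scaleR)
  moreover have "v \<in> W"
    using v by (simp add: W_def matrix_vector_mult_diff_rdistrib flip: scaleR_matrix_vector_assoc)
  ultimately have "W = UNIV" using irreducible v(1) unfolding irreducible_module_def by blast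
  then have "M = c *\<^sub>R mat 1"
    unfolding matrix_eq W_def by (auto simp flip: scaleR_matrix_vector_assoc)
  then show ?thesis by (simp add: trace_def mat_def)
qed

lemma sum_ad_eq_scalar:
  "(\<Sum>h\<in>G. ad h M) = (real (card G) * trace M / real CARD('d)) *\<^sub>R mat 1"
proof -
  define P where "P = (\<Sum>h\<in>G. ad h M)"
  have "k ** P = P ** k" if k: "k \<in> G" for k
  proof -
    have bij: "bij_betw ((**) k) G G"
      by (rule bij_betwI[where g="(**) (matrix_inv k)"])
        (auto simp: k mult_mem matrix_inv_mem matrix_mul_assoc matrix_inv_cancel invertible_mem)
    have "k ** P = (\<Sum>h\<in>G. ad (k ** h) M ** k)"
      unfolding P_def matrix_mult_sum using k
      by (auto simp: ad_def matrix_inv_mult invertible_mem matrix_mul_assoc matrix_inv_cancel_assoc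
          intro!: sum.cong)
    also have "\<dots> = P ** k"
      unfolding P_def matrix_sum_mult using sum.reindex_bij_betw[OF bij, of "\<lambda>h. ad h M ** k"] by simp
    finally show ?thesis .
  qed
  then have "P = (trace P / real CARD('d)) *\<^sub>R mat 1"
    by (intro commuting_matrix_eq_scalar) auto
  moreover have "trace P = real (card G) * trace M"
    by (simp add: P_def trace_sum trace_ad invertible_mem)
  ultimately show ?thesis unfolding P_def by simp
qed

lemma sum_trace_mult_trace_inv:
  assumes y: "invertible y"
  shows "(\<Sum>h\<in>G. trace (h ** y) * trace (matrix_inv (h ** y))) = real (card G)"
proof -
  have "(\<Sum>h\<in>G. trace (h ** y) * trace (matrix_inv (h ** y)))
      = (\<Sum>h\<in>G. \<Sum>a\<in>UNIV. \<Sum>b\<in>UNIV. (ad h (ad y (elementary_matrix a b))) $ a $ b)"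
    unfolding trace_mult_trace using y
    by (intro sum.cong refl) (simp add: ad_def matrix_inv_mult invertible_mem matrix_mul_assoc)
  also have "\<dots> = (\<Sum>a\<in>UNIV. \<Sum>b\<in>UNIV. (\<Sum>h\<in>G. ad h (ad y (elementary_matrix a b))) $ a $ b)"
    by (simp add: sum.swap[of _ G])
  also have "\<dots> = (\<Sum>a\<in>(UNIV::'d set). \<Sum>b\<in>UNIV.
      real (card G) * (if a = b then 1 else 0) / real CARD('d) * (if a = b then 1 else 0))"
    unfolding sum_ad_eq_scalar by (simp add: trace_ad y trace_elementary_matrix mat_def)
  also have "\<dots> = real (card G)"
    by (simp add: if_distrib if_distribR sum.delta cong: if_cong)
  finally show ?thesis .
qed

lemma trace_square_le_card_centralizer:
  assumes y: "invertible y"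
    and normal: "\<And>k. k \<in> G \<Longrightarrow> ad y k \<in> G"
    and finite_order: "\<And>h. h \<in> G \<Longrightarrow> \<exists>N>0. mpow (h ** y) N = mat 1"
  shows "(trace y)\<^sup>2 \<le> real (card (centralizer_aut G (ad y)))"
proof -
  \<comment> \<open>\<open>T\<close> is the conjugacy class of \<open>y\<close> translated into \<open>G\<close>.\<close>
  define T where "T = (\<lambda>k. ad k y ** matrix_inv y) ` G"
  have "ad k y ** matrix_inv y = k ** ad y (matrix_inv k)" for k
    by (simp add: ad_def matrix_mul_assoc)
  then have TG: "T \<subseteq> G"
    unfolding T_def using normal by (auto intro: mult_mem matrix_inv_mem)
  have "card T > 0" using mat_1_mem finite_carrier TG by (auto simp: T_def card_gt_0_iff)
  have "trace (t ** y) = trace y" if "t \<in> T" for t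
    using that y by (auto simp: T_def matrix_inv_cancel_assoc trace_ad invertible_mem)
  then have "real (card T) * (trace y)\<^sup>2 = (\<Sum>t\<in>T. (trace (t ** y))\<^sup>2)"
    by simp
  also have "\<dots> \<le> (\<Sum>h\<in>G. (trace (h ** y))\<^sup>2)"
    by (rule sum_mono2[OF finite_carrier TG]) auto
  also have "\<dots> = (\<Sum>h\<in>G. trace (h ** y) * trace (matrix_inv (h ** y)))"
    by (intro sum.cong refl) (metis finite_order power2_eq_square trace_matrix_inv_finite_order)
  also have "\<dots> = real (card G)"
    by (rule sum_trace_mult_trace_inv[OF y])
  also have "\<dots> \<le> real (card T) * real (card (centralizer_aut G (ad y)))"
    using card_le_card_conjugates_mult_card_centralizer[OF y] by (simp add: T_def flip: of_nat_mult)
  finally show ?thesis using \<open>card T > 0\<close> by simp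
qed

end

section \<open>Orders of automorphisms\<close>

lemma funpow_mult_fixes:
  assumes "\<forall>y\<in>G. (f ^^ m) y = y" "y \<in> G"
  shows "(f ^^ (m * q)) y = y"
  by (induction q) (simp_all add: assms funpow_add)

lemma aut_order_spec:
  assumes "N > 0" "\<forall>y\<in>G. (f ^^ N) y = y"
  shows "aut_order G f > 0" "\<forall>y\<in>G. (f ^^ aut_order G f) y = y"
  using LeastI[of "\<lambda>k. k > 0 \<and> (\<forall>y\<in>G. (f ^^ k) y = y)" N] assms
  unfolding aut_order_def by auto

lemma aut_order_dvd_iff:
  assumes "N > 0" "\<forall>y\<in>G. (f ^^ N) y = y"
  shows "(\<forall>y\<in>G. (f ^^ t) y = y) \<longleftrightarrow> aut_order G f dvd t"
proof -
  define m where "m = aut_order G f"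
  have "(f ^^ t) y = (f ^^ (t mod m)) y" if "y \<in> G" for y
    using funpow_mult_fixes[OF aut_order_spec(2)[OF assms] that, of "t div m"]
    by (metis m_def comp_apply funpow_add mod_mult_div_eq)
  moreover have "\<not> (\<forall>y\<in>G. (f ^^ k) y = y)" if "0 < k" "k < m" for k
    using not_less_Least[of k "\<lambda>k. k > 0 \<and> (\<forall>y\<in>G. (f ^^ k) y = y)"] that
    by (auto simp: m_def aut_order_def)
  ultimately show ?thesis
    using aut_order_spec(1)[OF assms] unfolding m_def[symmetric]
    by (metis dvd_eq_mod_eq_0 funpow_0 mod_less_divisor neq0_conv)
qed

lemma aut_order_funpow_eq_prime:
  assumes "N > 0" "\<forall>y\<in>G. (f ^^ N) y = y" "prime p"
    and "\<And>k. aut_order G f dvd j * k \<longleftrightarrow> p dvd k"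
  shows "aut_order G (f ^^ j) = p"
  unfolding aut_order_def[of G "f ^^ j"] funpow_mult aut_order_dvd_iff[OF assms(1,2)] assms(4)
  by (rule Least_equality) (use assms(3) in \<open>auto simp: prime_gt_0_nat dvd_imp_le\<close>)

lemma exists_multiple_with_prime_order_mod:
  fixes m i :: nat
  assumes "0 < i" "i < m"
  obtains s p where "prime p" "\<And>k. m dvd i * s * k \<longleftrightarrow> p dvd k"
proof -
  define d where "d = gcd m i"
  define q where "q = m div d"
  have d: "d > 0" "m = d * q" "i = d * (i div d)" using assms by (simp_all add: d_def q_def)
  have coprime: "coprime q (i div d)"
    unfolding q_def d_def using assms by (intro div_gcd_coprime) auto
  have "q \<noteq> 1"
  proof
    assume "q = 1"
    then have "m = gcd m i" using d(2) by (simp add: d_def)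
    then have "m dvd i" by (metis gcd_dvd2)
    then show False using assms by (simp add: nat_dvd_not_less)
  qed
  then obtain p where p: "prime p" "p dvd q" using prime_factor_nat by blast
  then obtain s where s: "q = s * p" by (metis dvd_mult_div_cancel mult.commute)
  have "m dvd i * s * k \<longleftrightarrow> p dvd k" for k
  proof -
    have "m dvd i * s * k \<longleftrightarrow> d * q dvd d * ((i div d) * (s * k))"
      using d(2,3) by (metis mult.assoc)
    also have "\<dots> \<longleftrightarrow> q dvd (i div d) * (s * k)" using d(1) by simp
    also have "\<dots> \<longleftrightarrow> q dvd s * k" using coprime by (simp add: coprime_dvd_mult_right_iff)
    also have "\<dots> \<longleftrightarrow> p dvd k" using s d assms by auto
    finally show ?thesis .
  qed
  then show ?thesis using that p(1) by blast
qed

lemma centralizer_aut_subset_funpow: "centralizer_aut G f \<subseteq> centralizer_aut G (f ^^ s)"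
proof -
  have "(f ^^ s) z = z" if "f z = z" for z
    using that by (induction s) auto
  then show ?thesis unfolding centralizer_aut_def by auto
qed

section \<open>The fixed vector\<close>

lemma mpow_mem:
  assumes "mat 1 \<in> H" "\<And>a b. a \<in> H \<Longrightarrow> b \<in> H \<Longrightarrow> a ** b \<in> H" "z \<in> H"
  shows "mpow z k \<in> H"
  by (induction k) (simp_all add: assms)

lemma finite_order_of_mult_closed:
  assumes "finite H" and closed: "\<And>a b. a \<in> H \<Longrightarrow> b \<in> H \<Longrightarrow> a ** b \<in> H"
    and z: "z \<in> H" "invertible z"
  shows "\<exists>N>0. mpow z N = mat 1"
proof -
  have "mpow z (Suc k) \<in> H" for k
    by (induction k) (auto simp: z closed)
  then have "\<not> inj (\<lambda>k. mpow z (Suc k))"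
    using finite_subset[OF _ \<open>finite H\<close>] by (metis finite_imageD image_subsetI infinite_UNIV_nat)
  then obtain a b where ab: "a < b" "mpow z (Suc a) = mpow z (Suc b)"
    unfolding inj_def by (metis linorder_neq_iff)
  moreover have "b - a + Suc a = Suc b" using ab(1) by simp
  ultimately have "mpow z (b - a) ** mpow z (Suc a) = mat 1 ** mpow z (Suc a)"
    by (metis mpow_add matrix_mul_lid)
  then have "mpow z (b - a) = mat 1"
    by (rule matrix_mul_right_cancel[OF invertible_mpow[OF z(2)]])
  then show ?thesis using ab(1) by (intro exI[of _ "b - a"]) simp
qed

lemma fixed_vector_if_trace_sum_mpow_pos:
  fixes x :: "real^'n^'n"
  assumes "mpow x m = mat 1" "trace (\<Sum>i<m. mpow x i) > 0"
  shows "\<exists>v. v \<noteq> 0 \<and> x *v v = v"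
proof -
  define P where "P = (\<Sum>i<m. mpow x i)"
  have "P \<noteq> 0" using assms(2) by (auto simp: P_def trace_0[simplified])
  then obtain w where w: "P *v w \<noteq> 0" by (metis matrix_eq matrix_vector_mult_0)
  have "x ** P = (\<Sum>i<m. mpow x (Suc i))" by (simp add: P_def matrix_mult_sum)
  also have "\<dots> = P"
    using assms(1) sum.lessThan_Suc_shift[of "mpow x"] sum.lessThan_Suc[of "\<lambda>i. mpow x (Suc i)"]
    by (cases m) (simp_all add: P_def add.commute)
  finally have "x *v (P *v w) = P *v w" by (simp add: matrix_vector_mul_assoc)
  then show ?thesis using w by blast
qed

lemma (in matrix_group) normalizer_extension_mult_closed:
  assumes n: "in_normalizer n G" and N: "N > 0" "mpow n N = mat 1"
  obtains H where "finite H" "G \<subseteq> H" "n \<in> H"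
    "\<And>a b. a \<in> H \<Longrightarrow> b \<in> H \<Longrightarrow> a ** b \<in> H" "\<And>a. a \<in> H \<Longrightarrow> invertible a"
proof -
  define H where "H = (\<lambda>(h, k). h ** mpow n k) ` (G \<times> {..<N})"
  have invn: "invertible n" and adn: "ad n ` G = G"
    using n unfolding in_normalizer_def by auto
  have ad_mpow_mem: "ad (mpow n k) h \<in> G" if "h \<in> G" for h k
  proof -
    have "(ad n ^^ k) h \<in> G" using that adn by (induction k) auto
    then show ?thesis by (simp add: funpow_ad[OF invn])
  qed
  have mem: "h ** mpow n k \<in> H" if "h \<in> G" for h k
    using that N mpow_mod[OF N(2), of k] unfolding H_def by force
  have "finite H" by (simp add: H_def finite_carrier)
  moreover have "G \<subseteq> H" using mem[of _ 0] by auto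
  moreover have "n \<in> H" using mem[OF mat_1_mem, of 1] by simp
  moreover have "a ** b \<in> H" if ab: "a \<in> H" "b \<in> H" for a b
  proof -
    obtain h1 k1 where a: "h1 \<in> G" "a = h1 ** mpow n k1" using ab(1) by (auto simp: H_def)
    obtain h2 k2 where b: "h2 \<in> G" "b = h2 ** mpow n k2" using ab(2) by (auto simp: H_def)
    have "a ** b = (h1 ** ad (mpow n k1) h2) ** mpow n (k1 + k2)"
      using a b by (simp add: ad_def mpow_add matrix_mul_assoc matrix_inv_cancel_assoc invertible_mpow invn)
    then show ?thesis using a b by (simp add: mem mult_mem ad_mpow_mem)
  qed
  moreover have "invertible a" if "a \<in> H" for a
    using that invertible_mem invertible_mpow[OF invn] invertible_mult unfolding H_def by auto
  ultimately show thesis by (rule that)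
qed

lemma (in matrix_group) finite_order_normalizer_coset:
  assumes n: "in_normalizer n G" "N > 0" "mpow n N = mat 1" and "g \<in> G" "h \<in> G"
  shows "\<exists>M>0. mpow (h ** mpow (g ** n) i) M = mat 1"
proof -
  obtain H where H: "finite H" "G \<subseteq> H" "n \<in> H"
    "\<And>a b. a \<in> H \<Longrightarrow> b \<in> H \<Longrightarrow> a ** b \<in> H" "\<And>a. a \<in> H \<Longrightarrow> invertible a"
    using normalizer_extension_mult_closed[OF n] by blast
  have "mpow (g ** n) i \<in> H" using H assms(4) mat_1_mem by (intro mpow_mem) auto
  then have "h ** mpow (g ** n) i \<in> H" using H assms(5) by auto
  then show ?thesis using finite_order_of_mult_closed[OF H(1,4)] H(5) by blast
qed

context odd_irreducible_group
begin

lemma mpow_aut_order_eq_mat_1: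
  assumes N: "N > 0" "mpow x N = mat 1" and even: "even (aut_order G (ad x))"
  shows "mpow x (aut_order G (ad x)) = mat 1"
proof -
  define m where "m = aut_order G (ad x)"
  have x: "invertible x" using invertible_if_mpow_eq_mat_1[OF N] .
  have "\<forall>y\<in>G. (ad x ^^ N) y = y" by (simp add: funpow_ad[OF x] N ad_mat_1)
  then have "\<forall>h\<in>G. ad (mpow x m) h = h"
    using aut_order_spec(2)[OF N(1)] by (simp only: m_def funpow_ad[OF x, symmetric])
  then have "h ** mpow x m = mpow x m ** h" if "h \<in> G" for h
    using that ad_eq_iff_commute[OF invertible_mpow[OF x]] by metis
  then obtain c where c: "mpow x m = c *\<^sub>R mat 1"
    using commuting_matrix_eq_scalar by blast
  \<comment> \<open>\<open>c \<ge> 0\<close>: its odd power \<open>det (x\<^sup>m) = det x ^ m\<close> is a square.\<close>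
  have "c ^ CARD('d) = det x ^ m" using det_mpow[of x m] by (simp add: c det_scaleR_mat_1)
  then have "c ^ CARD('d) \<ge> 0" using even by (simp add: m_def zero_le_even_power)
  then have "c \<ge> 0" using odd_dim by (simp add: zero_le_odd_power)
  have "(c ^ N) *\<^sub>R mat 1 = mpow (mpow x m) N" by (simp add: c mpow_scaleR_mat_1)
  also have "\<dots> = mat 1" by (metis N(2) mpow_mat_1 mpow_mult mult.commute)
  finally have scalar: "(c ^ N) *\<^sub>R (mat 1 :: real^'d^'d) = mat 1" .
  have "c ^ N = 1 ^ N"
    using arg_cong[OF scalar, of "\<lambda>A. A $ undefined $ undefined"] by (simp add: mat_def)
  then have "c = 1" using power_eq_iff_eq_base[OF N(1) \<open>c \<ge> 0\<close>, of 1] by simp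
  then show ?thesis using c by (simp add: m_def)
qed

lemma abs_trace_mpow_less:
  assumes normal: "\<And>h. h \<in> G \<Longrightarrow> ad x h \<in> G"
    and finite_order: "\<And>h i. h \<in> G \<Longrightarrow> \<exists>N>0. mpow (h ** mpow x i) N = mat 1"
    and bound: "\<forall>j. prime (aut_order G (ad x ^^ j)) \<longrightarrow>
      real CARD('d) > real (aut_order G (ad x) - 1)
        * sqrt (real (card (centralizer_aut G (ad x ^^ j))))"
    and i: "0 < i" "i < aut_order G (ad x)"
  shows "\<bar>trace (mpow x i)\<bar> < real CARD('d) / real (aut_order G (ad x) - 1)"
proof -
  define m where "m = aut_order G (ad x)"
  obtain N where N: "N > 0" "mpow x N = mat 1"
    using finite_order[OF mat_1_mem, of 1] by auto
  have x: "invertible x" using invertible_if_mpow_eq_mat_1[OF N] .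
  have fixN: "\<forall>y\<in>G. (ad x ^^ N) y = y" by (simp add: funpow_ad[OF x] N ad_mat_1)
  obtain s p where sp: "prime p" "\<And>k. m dvd i * s * k \<longleftrightarrow> p dvd k"
    using exists_multiple_with_prime_order_mod[OF i[folded m_def]] by blast
  have "aut_order G (ad x ^^ (i * s)) = p"
    by (rule aut_order_funpow_eq_prime[OF N(1) fixN sp(1)]) (simp add: sp(2)[unfolded m_def])
  with sp(1) have bound_is: "real (m - 1) * sqrt (real (card (centralizer_aut G (ad x ^^ (i * s)))))
      < real CARD('d)"
    using bound by (simp add: m_def)
  have "(ad x ^^ i) h \<in> G" if "h \<in> G" for h
    using that normal by (induction i) auto
  then have "ad (mpow x i) h \<in> G" if "h \<in> G" for h
    using that by (simp add: funpow_ad[OF x])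
  then have "(trace (mpow x i))\<^sup>2 \<le> real (card (centralizer_aut G (ad (mpow x i))))"
    using trace_square_le_card_centralizer[OF invertible_mpow[OF x]] finite_order by blast
  also have "\<dots> \<le> real (card (centralizer_aut G (ad x ^^ (i * s))))"
    using card_mono[OF finite_centralizer centralizer_aut_subset_funpow[of G "ad x ^^ i" s]]
    by (simp add: funpow_ad[OF x, symmetric] funpow_mult)
  finally have "\<bar>trace (mpow x i)\<bar> \<le> sqrt (real (card (centralizer_aut G (ad x ^^ (i * s)))))"
    by (metis real_sqrt_abs real_sqrt_le_mono)
  moreover have "m - 1 > 0" using i by (simp add: m_def)
  ultimately have "real (m - 1) * \<bar>trace (mpow x i)\<bar> < real CARD('d)"
    using bound_is by (smt (verit) mult_left_mono of_nat_0_less_iff)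
  then show ?thesis using \<open>m - 1 > 0\<close> by (simp add: m_def field_simps)
qed

lemma exists_fixed_vector:
  assumes normal: "\<And>h. h \<in> G \<Longrightarrow> ad x h \<in> G"
    and finite_order: "\<And>h i. h \<in> G \<Longrightarrow> \<exists>N>0. mpow (h ** mpow x i) N = mat 1"
    and even: "even (aut_order G (ad x))"
    and bound: "\<forall>j. prime (aut_order G (ad x ^^ j)) \<longrightarrow>
      real CARD('d) > real (aut_order G (ad x) - 1)
        * sqrt (real (card (centralizer_aut G (ad x ^^ j))))"
  shows "\<exists>v. v \<noteq> 0 \<and> x *v v = v"
proof -
  define m where "m = aut_order G (ad x)"
  obtain N where N: "N > 0" "mpow x N = mat 1"
    using finite_order[OF mat_1_mem, of 1] by auto
  have x: "invertible x" using invertible_if_mpow_eq_mat_1[OF N] .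
  have "m > 0"
    unfolding m_def by (rule aut_order_spec(1)[OF N(1)]) (simp add: funpow_ad[OF x] N ad_mat_1)
  with even have "m \<ge> 2" unfolding m_def by (rule dvd_imp_le)
  have "(\<Sum>i\<in>{1..<m}. - real CARD('d) / real (m - 1)) < (\<Sum>i\<in>{1..<m}. trace (mpow x i))"
  proof (rule sum_strict_mono)
    fix i assume "i \<in> {1..<m}"
    then show "- real CARD('d) / real (m - 1) < trace (mpow x i)"
      using abs_trace_mpow_less[OF normal finite_order bound, of i] by (simp add: m_def)
  qed (use \<open>m \<ge> 2\<close> in auto)
  moreover have "(\<Sum>i<m. trace (mpow x i)) = real CARD('d) + (\<Sum>i\<in>{1..<m}. trace (mpow x i))"
    using \<open>m \<ge> 2\<close> by (simp add: atLeast0LessThan[symmetric] sum.atLeast_Suc_lessThan trace_I)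
  ultimately have "trace (\<Sum>i<m. mpow x i) > 0"
    using \<open>m \<ge> 2\<close> by (simp add: trace_sum)
  then show ?thesis
    using fixed_vector_if_trace_sum_mpow_pos mpow_aut_order_eq_mat_1[OF N even] by (simp add: m_def)
qed

end

theorem proposition3:
  fixes G :: "(real^'d^'d) set" and n g :: "real^'d^'d"
  assumes "odd CARD('d)"
    and "finite_matrix_group G"
    and "irreducible_module G"
    and "nontrivial_module G"
    and "- mat 1 \<notin> G"
    and "in_normalizer n G"
    and "\<exists>k>0. mpow n k = mat 1"
    and "g \<in> G"
    and "even (aut_order G (ad g \<circ> ad n))"
    and "\<forall>j. prime (aut_order G ((ad g \<circ> ad n) ^^ j)) \<longrightarrow>
           real CARD('d) > real (aut_order G (ad g \<circ> ad n) - 1)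
              * sqrt (real (card (centralizer_aut G ((ad g \<circ> ad n) ^^ j))))"
  shows "E1_property G n"
proof -
  interpret odd_irreducible_group G
    using assms(1-3) by unfold_locales
  obtain N where N: "N > 0" "mpow n N = mat 1" using assms(7) by blast
  have n: "invertible n" "ad n ` G = G" using assms(6) unfolding in_normalizer_def by auto
  have ad_gn: "ad g \<circ> ad n = ad (g ** n)"
    by (simp add: ad_mult invertible_mem[OF assms(8)] n(1))
  have "ad (g ** n) h \<in> G" if "h \<in> G" for h
  proof -
    have "ad n h \<in> G" using that n(2) by blast
    then show ?thesis using ad_mem[OF assms(8)] by (simp flip: ad_gn)
  qed
  moreover note finite_order_normalizer_coset[OF assms(6) N assms(8)]
  ultimately obtain v where "v \<noteq> 0" "(g ** n) *v v = v"
    using exists_fixed_vector assms(9,10) unfolding ad_gn by blast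
  then show ?thesis unfolding E1_property_def using assms(8) by blast
qed

end
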